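(* Let $f_\lambda$ be a probability density on $(0,\infty)$ with finite mean $\mu_\lambda$. Let $P_p$ be a probability distribution on $\{1,\dots,N\}$ with mean $E_p[n]=\sum_n n\,P_p(n)$, and for each $n$ let $g(\cdot\mid n)$ be a probability distribution on $\{0,1,\dots,N\}$ with mean $\overline{g}(n)=\sum_m m\,g(m\mid n)$. Consider random variables $(N_p,N_a,X,T)$ such that: $P\{N_p=n\}=\frac{n}{E_p[n]}P_p(n)$; conditionally on $N_p=n$, $N_a$ has distribution $g(\cdot\mid n)$; conditionally on $N_a=m$, $X$ is distributed as $\lambda_1+\dots+\lambda_m$ with $\lambda_1,\dots,\lambda_m$ i.i.d. with density $f_\lambda$ ($X=0$ if $m=0$); conditionally on $X=x$, $T$ is exponentially distributed with rate $x$ ($T=+\infty$ if $x=0$). Then for every $TTL\ge 0$, $$P\{T\le TTL\}\ \le\ 1-\frac{1}{E_p[n]}\,E_p\!\left[n\, e^{-\overline{g}(n)\,\mu_\lambda\,TTL}\right],$$ where $E_p[h(n)]=\sum_n h(n)P_p(n)$.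
   Context: This models the content access time $T$ of a random content request in an opportunistic network: $P_p(n)$ is the fraction of contents requested by exactly $n$ nodes (content popularity distribution), $g(m\mid n)$ is the probability that a content of popularity $n$ is held by $m$ nodes, $f_\lambda$ is the distribution of pairwise contact rates (inter-contact times exponential), and $X$ is the sum of contact rates between the requester and the holders; $P\{T\le TTL\}$ is the probability the content is accessed by deadline $TTL$. *)

theory Defs
  imports "HOL-Probability.Probability"
begin

text \<open>Law of the sum \<open>\<lambda>_1 + ... + \<lambda>_m\<close> of m i.i.d. rates with density f
  (the empty sum, m = 0, gives the point mass at 0).\<close>
definition sum_law :: "(real \<Rightarrow> real) \<Rightarrow> nat \<Rightarrow> real measure" where
  "sum_law f m = distr (PiM {..<m} (\<lambda>_. density lborel (\<lambda>x. ennreal (f x)))) borel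
                       (\<lambda>l. \<Sum>i<m. l i)"

definition exp_law :: "real \<Rightarrow> ereal measure" where
  "exp_law x = (if x > 0 then distr (density lborel (\<lambda>t. ennreal (exponential_density x t))) borel ereal
                else return borel \<infinity>)"

definition Ep :: "nat pmf \<Rightarrow> nat \<Rightarrow> real" where
  "Ep Pp N = (\<Sum>n\<in>{1..N}. real n * pmf Pp n)"

definition Np_law :: "nat pmf \<Rightarrow> nat \<Rightarrow> nat measure" where
  "Np_law Pp N = density (count_space UNIV) (\<lambda>n. ennreal (real n * pmf Pp n / Ep Pp N))"

definition gbar :: "(nat \<Rightarrow> nat pmf) \<Rightarrow> nat \<Rightarrow> nat \<Rightarrow> real" where
  "gbar g N n = (\<Sum>m\<in>{0..N}. real m * pmf (g n) m)"

definition T_law :: "nat pmf \<Rightarrow> (nat \<Rightarrow> nat pmf) \<Rightarrow> (real \<Rightarrow> real) \<Rightarrow> nat \<Rightarrow> ereal measure" where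
  "T_law Pp g f N =
     Np_law Pp N \<bind> (\<lambda>n. measure_pmf (g n) \<bind> (\<lambda>m. sum_law f m \<bind> (\<lambda>x. exp_law x)))"

end

theory Submission
  imports Defs
begin

text \<open>Given X = x we have P{T \<le> t} = 1 - exp (-x t), which is concave in x. So given the
  number m of holders, Jensen's inequality bounds P{T \<le> t} by 1 - exp (-E[X] t), and
  E[X] \<le> m \<mu> by linearity. The bound is again concave in m, so averaging over
  m \<sim> g(\<cdot>|n) and applying Jensen once more replaces m by its mean gbar(n); the
  size-biased average over n then gives the theorem.\<close>

lemma sets_exp_law [simp]: "sets (exp_law x) = sets borel"
  unfolding exp_law_def by auto

lemma prob_space_exp_law: "prob_space (exp_law x)"
  unfolding exp_law_def
  by (auto intro!: prob_space.prob_space_distr prob_space_exponential_density prob_space_return)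

lemma exp_law_measurable: "exp_law \<in> measurable borel (subprob_algebra borel)"
proof (rule measurable_subprob_algebra)
  fix x show "subprob_space (exp_law x)"
    using prob_space_exp_law prob_space_imp_subprob_space by blast
next
  fix A :: "ereal set" assume A: "A \<in> sets borel"
  have [measurable]: "ereal -` A \<in> sets borel"
    using measurable_sets[OF _ A, of ereal borel] by simp
  have "emeasure (exp_law x) A = (if x > 0 then
          \<integral>\<^sup>+ t. ennreal (exponential_density x t) * indicator (ereal -` A) t \<partial>lborel
        else indicator A \<infinity>)" for x
    using A by (simp add: exp_law_def emeasure_distr emeasure_density)
  then show "(\<lambda>x. emeasure (exp_law x) A) \<in> borel_measurable borel"
    unfolding exponential_density_def by simp measurable
qed simp

lemma emeasure_exp_law_atMost:
  assumes "t \<ge> 0"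
  shows "emeasure (exp_law x) {.. ereal t} = ennreal (1 - exp (- max x 0 * t))"
proof (cases "x > 0")
  case True
  have "ereal -` {.. ereal t} = {.. t}" by auto
  then have "emeasure (exp_law x) {.. ereal t} = emeasure (density lborel (exponential_density x)) {.. t}"
    using True unfolding exp_law_def by (simp add: emeasure_distr)
  also have "\<dots> = ennreal (1 - exp (- x * t))"
    using True assms by (simp add: emeasure_erlang_density erlang_CDF_0)
  finally show ?thesis using True by simp
qed (simp add: exp_law_def)

lemma (in prob_space) exp_minus_expectation_le:
  fixes Y :: "'a \<Rightarrow> real"
  assumes "integrable M Y" "integrable M (\<lambda>x. exp (- Y x))"
  shows "exp (- expectation Y) \<le> expectation (\<lambda>x. exp (- Y x))"
proof -
  have "exp (expectation (\<lambda>x. - Y x)) \<le> expectation (\<lambda>x. exp (- Y x))"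
    using convex_on_exp[of 1] assms by (intro jensens_inequality[where I=UNIV]) auto
  then show ?thesis by simp
qed

lemma emeasure_bind_le_one_minus_exp_expectation:
  fixes Y :: "'a \<Rightarrow> real"
  assumes "prob_space M" and K: "K \<in> measurable M (subprob_algebra N)" and "A \<in> sets N"
    and Y: "integrable M Y" and Y_nonneg: "\<And>x. x \<in> space M \<Longrightarrow> 0 \<le> Y x"
    and bound: "\<And>x. x \<in> space M \<Longrightarrow> emeasure (K x) A \<le> ennreal (1 - exp (- Y x))"
  shows "emeasure (M \<bind> K) A \<le> ennreal (1 - exp (- (\<integral>x. Y x \<partial>M)))"
proof -
  interpret prob_space M by fact
  have Y_meas [measurable]: "Y \<in> borel_measurable M"
    using Y by blast
  have exp_Y: "integrable M (\<lambda>x. exp (- Y x))"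
    using Y_nonneg by (intro integrable_const_bound[where B=1]) auto
  have "emeasure (M \<bind> K) A = (\<integral>\<^sup>+x. emeasure (K x) A \<partial>M)"
    using K \<open>A \<in> sets N\<close> not_empty by (intro emeasure_bind) auto
  also have "\<dots> \<le> (\<integral>\<^sup>+x. ennreal (1 - exp (- Y x)) \<partial>M)"
    using bound by (intro nn_integral_mono) auto
  also have "\<dots> = ennreal (\<integral>x. 1 - exp (- Y x) \<partial>M)"
    using exp_Y Y_nonneg by (intro nn_integral_eq_integral AE_I2) auto
  also have "(\<integral>x. 1 - exp (- Y x) \<partial>M) = 1 - (\<integral>x. exp (- Y x) \<partial>M)"
    using exp_Y by (simp add: prob_space)
  also have "\<dots> \<le> 1 - exp (- (\<integral>x. Y x \<partial>M))"
    using exp_minus_expectation_le[OF Y exp_Y] by simp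
  finally show ?thesis by (simp add: ennreal_leI)
qed

lemma integral_pos_part_sum_PiM_le:
  fixes D :: "real measure" and m :: nat
  assumes D: "prob_space D" "sets D = sets borel" and pos: "integrable D (\<lambda>x. max x 0)"
  defines "P \<equiv> PiM {..<m} (\<lambda>_. D)"
  shows "integrable P (\<lambda>l. max (\<Sum>i<m. l i) 0)"
    and "(\<integral>l. max (\<Sum>i<m. l i) 0 \<partial>P) \<le> real m * (\<integral>x. max x 0 \<partial>D)"
proof -
  have sets_P: "sets P = sets (PiM {..<m} (\<lambda>_. borel))"
    unfolding P_def using D(2) by (intro sets_PiM_cong) auto
  have [measurable]: "(\<lambda>l. \<Sum>i<m. l i) \<in> borel_measurable P"
    by (subst measurable_cong_sets[OF sets_P refl]) measurable
  have component: "integrable P (\<lambda>l. max (l i) 0) \<and> (\<integral>l. max (l i) 0 \<partial>P) = (\<integral>x. max x 0 \<partial>D)"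
    if "i < m" for i
  proof -
    have meas: "(\<lambda>l. l i) \<in> measurable P D"
      unfolding P_def using that by (intro measurable_component_singleton) auto
    have pos_meas: "(\<lambda>x. max x 0) \<in> borel_measurable D"
      using D(2) by (subst measurable_cong_sets[of _ borel]) auto
    have "distr P D (\<lambda>l. l i) = D"
      unfolding P_def using that D(1) by (intro distr_PiM_component) auto
    then show ?thesis
      using pos integrable_distr_eq[OF meas pos_meas] integral_distr[OF meas pos_meas] by simp
  qed
  have sum_pos: "integrable P (\<lambda>l. \<Sum>i<m. max (l i) 0)"
    using component by auto
  have bound: "max (\<Sum>i<m. l i) 0 \<le> (\<Sum>i<m. max (l i) 0)" for l :: "nat \<Rightarrow> real"
    using sum_mono[of "{..<m}" l "\<lambda>i. max (l i) 0"] sum_nonneg[of "{..<m}" "\<lambda>i. max (l i) 0"] by simp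
  show int: "integrable P (\<lambda>l. max (\<Sum>i<m. l i) 0)"
    by (rule Bochner_Integration.integrable_bound[OF sum_pos])
       (use bound in \<open>auto intro!: AE_I2 order_trans[OF _ abs_ge_self]\<close>)
  have "(\<integral>l. max (\<Sum>i<m. l i) 0 \<partial>P) \<le> (\<integral>l. (\<Sum>i<m. max (l i) 0) \<partial>P)"
    by (intro Bochner_Integration.integral_mono int sum_pos bound)
  also have "\<dots> = real m * (\<integral>x. max x 0 \<partial>D)"
    using component by (subst Bochner_Integration.integral_sum) auto
  finally show "(\<integral>l. max (\<Sum>i<m. l i) 0 \<partial>P) \<le> real m * (\<integral>x. max x 0 \<partial>D)" .
qed

context
  fixes f :: "real \<Rightarrow> real"
  assumes f_meas [measurable]: "f \<in> borel_measurable borel"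
    and f_nonneg: "\<And>x. f x \<ge> 0"
    and f_pos_support: "\<And>x. x \<le> 0 \<Longrightarrow> f x = 0"
    and f_int: "integrable lborel f"
    and f_prob: "(LINT x|lborel. f x) = 1"
    and f_mean: "integrable lborel (\<lambda>x. x * f x)"
begin

abbreviation rate_law :: "real measure" where
  "rate_law \<equiv> density lborel (\<lambda>x. ennreal (f x))"

lemma prob_space_rate_law: "prob_space rate_law"
proof
  have "emeasure rate_law (space rate_law) = ennreal (LINT x|lborel. f x)"
    using f_int f_nonneg by (simp add: emeasure_density nn_integral_eq_integral)
  then show "emeasure rate_law (space rate_law) = 1"
    using f_prob by simp
qed

lemma mean_rate_nonneg: "0 \<le> (LINT x|lborel. x * f x)"
  using f_nonneg f_pos_support by (intro integral_nonneg_AE AE_I2) (metis mult_nonneg_nonneg nle_le mult_zero_right)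

lemma pos_part_rate_law:
  shows "integrable rate_law (\<lambda>x. max x 0)"
    and "(\<integral>x. max x 0 \<partial>rate_law) = (LINT x|lborel. x * f x)"
proof -
  have eq: "f x * max x 0 = x * f x" for x
    using f_pos_support[of x] by (auto simp: max_def)
  show "integrable rate_law (\<lambda>x. max x 0)"
    using f_nonneg f_mean by (subst integrable_density) (auto simp: eq)
  show "(\<integral>x. max x 0 \<partial>rate_law) = (LINT x|lborel. x * f x)"
    using f_nonneg by (subst integral_density) (auto simp: eq)
qed

lemma sets_sum_law [simp]: "sets (sum_law f m) = sets borel"
  unfolding sum_law_def by simp

lemma prob_space_sum_law: "prob_space (sum_law f m)"
  unfolding sum_law_def
  by (intro prob_space.prob_space_distr prob_space_PiM prob_space_rate_law) auto

lemma pos_part_sum_law: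
  shows "integrable (sum_law f m) (\<lambda>x. max x 0)"
    and "(\<integral>x. max x 0 \<partial>sum_law f m) \<le> real m * (LINT x|lborel. x * f x)"
proof -
  let ?P = "PiM {..<m} (\<lambda>_. rate_law)"
  have sets_P: "sets ?P = sets (PiM {..<m} (\<lambda>_. borel))"
    by (intro sets_PiM_cong) auto
  have [measurable]: "(\<lambda>l. \<Sum>i<m. l i) \<in> borel_measurable ?P"
    by (subst measurable_cong_sets[OF sets_P refl]) measurable
  note PiM = integral_pos_part_sum_PiM_le[OF prob_space_rate_law _ pos_part_rate_law(1), of m]
  show "integrable (sum_law f m) (\<lambda>x. max x 0)"
    using PiM(1) by (simp add: sum_law_def integrable_distr_eq)
  show "(\<integral>x. max x 0 \<partial>sum_law f m) \<le> real m * (LINT x|lborel. x * f x)"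
    using PiM(2) by (simp add: sum_law_def integral_distr pos_part_rate_law(2))
qed

lemma exp_law_measurable_sum_law: "exp_law \<in> measurable (sum_law f m) (subprob_algebra borel)"
  using exp_law_measurable by (simp add: measurable_cong_sets[OF sets_sum_law refl])

lemma sum_law_bind_exp_law_in_space: "sum_law f m \<bind> exp_law \<in> space (subprob_algebra borel)"
  using prob_space_sum_law exp_law_measurable_sum_law
  by (intro subprob_space.bind_in_space prob_space_imp_subprob_space)

lemma emeasure_sum_law_bind_exp_law_atMost_le:
  assumes t: "t \<ge> 0"
  shows "emeasure (sum_law f m \<bind> exp_law) {.. ereal t}
     \<le> ennreal (1 - exp (- real m * (LINT x|lborel. x * f x) * t))"
proof -
  let ?Y = "\<lambda>x. max x 0 * t"
  have "emeasure (sum_law f m \<bind> exp_law) {.. ereal t} \<le> ennreal (1 - exp (- (\<integral>x. ?Y x \<partial>sum_law f m)))"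
  proof (rule emeasure_bind_le_one_minus_exp_expectation[OF prob_space_sum_law exp_law_measurable_sum_law])
    show "integrable (sum_law f m) ?Y"
      using pos_part_sum_law(1) by simp
  qed (use t emeasure_exp_law_atMost in auto)
  also have "\<dots> \<le> ennreal (1 - exp (- real m * (LINT x|lborel. x * f x) * t))"
    using pos_part_sum_law(2)[of m] t by (intro ennreal_leI) (simp add: mult_right_mono)
  finally show ?thesis .
qed

lemma pmf_bind_sum_law_exp_law_in_space:
  "measure_pmf p \<bind> (\<lambda>m. sum_law f m \<bind> exp_law) \<in> space (subprob_algebra borel)"
  using sum_law_bind_exp_law_in_space by (intro measure_pmf.bind_in_space) simp

lemma emeasure_pmf_bind_atMost_le:
  assumes t: "t \<ge> 0" and S: "finite S" "set_pmf p \<subseteq> S"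
  shows "emeasure (measure_pmf p \<bind> (\<lambda>m. sum_law f m \<bind> exp_law)) {.. ereal t}
     \<le> ennreal (1 - exp (- (\<Sum>m\<in>S. real m * pmf p m) * (LINT x|lborel. x * f x) * t))"
proof -
  let ?Y = "\<lambda>m. real m * (LINT x|lborel. x * f x) * t"
  have "(\<integral>m. real m \<partial>p) = (\<Sum>m\<in>S. real m * pmf p m)"
    using S by (subst integral_measure_pmf[of S]) (auto simp: mult.commute)
  then have mean: "(\<integral>m. ?Y m \<partial>p) = (\<Sum>m\<in>S. real m * pmf p m) * (LINT x|lborel. x * f x) * t"
    by (simp add: mult.assoc)
  have "emeasure (measure_pmf p \<bind> (\<lambda>m. sum_law f m \<bind> exp_law)) {.. ereal t}
     \<le> ennreal (1 - exp (- (\<integral>m. ?Y m \<partial>p)))"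
    using S t mean_rate_nonneg sum_law_bind_exp_law_in_space emeasure_sum_law_bind_exp_law_atMost_le
    by (intro emeasure_bind_le_one_minus_exp_expectation integrable_measure_pmf_finite prob_space_measure_pmf)
       (auto simp: finite_subset mult.assoc)
  then show ?thesis
    unfolding mean by (simp only: mult_minus_left)
qed

end

lemma Ep_pos:
  assumes supp: "set_pmf Pp \<subseteq> {1..N}"
  shows "0 < Ep Pp N"
proof -
  obtain n where n: "n \<in> set_pmf Pp"
    using set_pmf_not_empty by fast
  then have "0 < real n * pmf Pp n"
    using supp by (auto simp: pmf_positive)
  also have "\<dots> \<le> Ep Pp N"
    unfolding Ep_def using n supp by (intro member_le_sum) auto
  finally show ?thesis .
qed

lemma measure_Np_law_bind_le:
  assumes supp: "set_pmf Pp \<subseteq> {1..N}"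
    and K: "\<And>n. K n \<in> space (subprob_algebra M)" and A: "A \<in> sets M"
    and b_nonneg: "\<And>n. 0 \<le> b n" and bound: "\<And>n. emeasure (K n) A \<le> ennreal (b n)"
  shows "measure (Np_law Pp N \<bind> K) A \<le> (\<Sum>n\<in>{1..N}. real n * pmf Pp n * b n) / Ep Pp N"
proof -
  let ?w = "\<lambda>n. real n * pmf Pp n / Ep Pp N"
  have wb_nonneg: "0 \<le> ?w n * b n" for n
    using Ep_pos[OF supp] b_nonneg[of n] by simp
  have sets_Np: "sets (Np_law Pp N) = sets (count_space UNIV)"
    unfolding Np_law_def by simp
  have "K \<in> measurable (Np_law Pp N) (subprob_algebra M)"
    by (subst measurable_cong_sets[OF sets_Np refl]) (use K in auto)
  then have "emeasure (Np_law Pp N \<bind> K) A = (\<integral>\<^sup>+n. emeasure (K n) A \<partial>Np_law Pp N)"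
    using A sets_eq_imp_space_eq[OF sets_Np] by (intro emeasure_bind) auto
  also have "\<dots> \<le> (\<integral>\<^sup>+n. ennreal (b n) \<partial>Np_law Pp N)"
    using bound by (intro nn_integral_mono)
  also have "\<dots> = (\<integral>\<^sup>+n. ennreal (?w n * b n) \<partial>count_space UNIV)"
    unfolding Np_law_def using b_nonneg
    by (subst nn_integral_density) (auto intro!: nn_integral_cong simp del: times_divide_eq_left simp: ennreal_mult'')
  also have "\<dots> = ennreal (\<Sum>n\<in>{1..N}. ?w n * b n)"
  proof (subst nn_integral_count_space')
    fix n assume "n \<notin> {1..N}"
    then have "pmf Pp n = 0"
      using supp by (auto simp: set_pmf_eq)
    then show "ennreal (?w n * b n) = 0"
      by simp
  qed (use wb_nonneg in \<open>auto intro!: sum_ennreal\<close>)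
  finally have "measure (Np_law Pp N \<bind> K) A \<le> (\<Sum>n\<in>{1..N}. ?w n * b n)"
    unfolding measure_def using wb_nonneg by (intro enn2real_leI sum_nonneg)
  then show ?thesis
    by (simp add: sum_divide_distrib)
qed

theorem theorem2:
  fixes Pp :: "nat pmf" and g :: "nat \<Rightarrow> nat pmf" and f :: "real \<Rightarrow> real"
    and N :: nat and TTL :: real
  assumes Pp_supp: "set_pmf Pp \<subseteq> {1..N}"
    and g_supp: "\<And>n. set_pmf (g n) \<subseteq> {0..N}"
    and f_meas: "f \<in> borel_measurable borel"
    and f_nonneg: "\<And>x. f x \<ge> 0"
    and f_pos_support: "\<And>x. x \<le> 0 \<Longrightarrow> f x = 0"
    and f_int: "integrable lborel f"
    and f_prob: "(LINT x|lborel. f x) = 1"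
    and f_mean: "integrable lborel (\<lambda>x. x * f x)"
    and TTL: "TTL \<ge> 0"
  shows "measure (T_law Pp g f N) {.. ereal TTL}
         \<le> 1 - (1 / Ep Pp N) *
               (\<Sum>n\<in>{1..N}. real n * exp (- gbar g N n * (LINT x|lborel. x * f x) * TTL) * pmf Pp n)"
proof -
  note f = f_meas f_nonneg f_pos_support f_int f_prob f_mean
  let ?e = "\<lambda>n. exp (- gbar g N n * (LINT x|lborel. x * f x) * TTL)"
  have "gbar g N n \<ge> 0" for n
    unfolding gbar_def by (intro sum_nonneg) auto
  then have e_le_1: "?e n \<le> 1" for n
    using mean_rate_nonneg[OF f] TTL by simp
  have "measure (T_law Pp g f N) {.. ereal TTL} \<le> (\<Sum>n\<in>{1..N}. real n * pmf Pp n * (1 - ?e n)) / Ep Pp N"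
    unfolding T_law_def
  proof (rule measure_Np_law_bind_le[OF Pp_supp pmf_bind_sum_law_exp_law_in_space[OF f]])
    show "emeasure (measure_pmf (g n) \<bind> (\<lambda>m. sum_law f m \<bind> exp_law)) {.. ereal TTL} \<le> ennreal (1 - ?e n)" for n
      using emeasure_pmf_bind_atMost_le[OF f TTL _ g_supp] by (simp add: gbar_def)
  qed (use e_le_1 in auto)
  also have "(\<Sum>n\<in>{1..N}. real n * pmf Pp n * (1 - ?e n)) = Ep Pp N - (\<Sum>n\<in>{1..N}. real n * ?e n * pmf Pp n)"
    by (simp add: Ep_def algebra_simps sum_subtractf)
  finally show ?thesis
    using Ep_pos[OF Pp_supp] by (simp add: field_simps)
qed

end
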